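(* Let $n$ be a positive odd integer and let $G$ be a finite group. Then $P_e(G)\cong P_e(Q_8\times\mathbb{Z}_n)$ if and only if $G\cong Q_8\times\mathbb{Z}_n$.
   Context: All groups are finite. $Q_8$ is the quaternion group of order $8$ and $\mathbb{Z}_n$ the cyclic group of order $n$. For a group $X$, the enhanced power graph $P_e(X)$ is the simple graph with vertex set $X$ in which two distinct vertices $x,y$ are adjacent if and only if $\langle x,y\rangle$ is cyclic. *)

theory Defs
  imports "HOL-Algebra.Algebra"
begin

definition pe_adj :: "('a, 'b) monoid_scheme \<Rightarrow> 'a \<Rightarrow> 'a \<Rightarrow> bool" where
  "pe_adj G x y \<longleftrightarrow> x \<noteq> y \<and> cyclic_group (subgroup_generated G {x, y})"

definition pe_graph_iso :: "('a, 'b) monoid_scheme \<Rightarrow> ('c, 'd) monoid_scheme \<Rightarrow> bool" where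
  "pe_graph_iso G H \<longleftrightarrow> (\<exists>f. bij_betw f (carrier G) (carrier H) \<and>
      (\<forall>x\<in>carrier G. \<forall>y\<in>carrier G. pe_adj G x y \<longleftrightarrow> pe_adj H (f x) (f y)))"

text \<open>Quaternion group Q8: elements (s, u), s = True means sign -1,
  u = 0,1,2,3 stands for 1, i, j, k.\<close>
definition q_unit_mult :: "nat \<Rightarrow> nat \<Rightarrow> bool \<times> nat" where
  "q_unit_mult a b =
     (if a = 0 then (False, b)
      else if b = 0 then (False, a)
      else if a = b then (True, 0)
      else (b \<noteq> a mod 3 + 1, 6 - a - b))"

definition Q8 :: "(bool \<times> nat) monoid" where
  "Q8 = \<lparr>carrier = UNIV \<times> {0..<4},
         monoid.mult = (\<lambda>(s, a) (t, b). (s \<noteq> (t \<noteq> fst (q_unit_mult a b)), snd (q_unit_mult a b))),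
         one = (False, 0)\<rparr>"

end

theory Submission
  imports Defs
begin

text \<open>Let \<open>f\<close> be an isomorphism from \<open>P\<^sub>e(G)\<close> onto \<open>P\<^sub>e(Q\<^sub>8 \<times> \<int>\<^sub>n)\<close> and
  let the \<^emph>\<open>axis\<close> \<open>cl x \<in> {0,1,2,3}\<close> of \<open>x \<in> G\<close> record whether \<open>f x\<close> has
  \<open>Q\<^sub>8\<close>-component \<open>\<plusminus>1, \<plusminus>i, \<plusminus>j\<close> or \<open>\<plusminus>k\<close>. In \<open>Q\<^sub>8 \<times> \<int>\<^sub>n\<close>, and hence in \<open>G\<close>,
  two elements lie in a common cyclic subgroup iff one has axis 0 or both have the same
  axis. For each axis \<open>i \<noteq> 0\<close>, an element \<open>a\<^sub>i\<close> of axis \<open>i\<close> and maximal order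
  generates exactly the \<open>4n\<close> elements of axes 0 and \<open>i\<close>. So \<open>G\<close> is covered by three
  cyclic subgroups of order \<open>4n\<close> meeting in the central subgroup \<open>D\<close> of axis-0
  elements, of index 2 in each of them. Then \<open>i = a\<^sub>1\<^sup>n\<close> and \<open>j = a\<^sub>2\<^sup>n\<close> have the
  common square \<open>z = a\<^sub>1\<^sup>2\<^sup>n\<close>, the unique involution of \<open>D\<close>, and they anticommute;
  together with \<open>c = a\<^sub>1\<^sup>4\<close> of order \<open>n\<close> they give an injective homomorphism
  \<open>Q\<^sub>8 \<times> \<int>\<^sub>n \<rightarrow> G\<close>, which is onto by counting. Conversely, group isomorphisms
  preserve the cyclicity of the subgroups generated by pairs.\<close>

section \<open>Cyclic subgroups and enhanced power graphs\<close>

definition common_cyclic :: "('a, 'b) monoid_scheme \<Rightarrow> 'a \<Rightarrow> 'a \<Rightarrow> bool" where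
  "common_cyclic G x y \<longleftrightarrow> (\<exists>g\<in>carrier G. x \<in> generate G {g} \<and> y \<in> generate G {g})"

context group begin

lemma generate_singleton_commute:
  assumes "g \<in> carrier G" "x \<in> generate G {g}" "y \<in> generate G {g}"
  shows "x \<otimes> y = y \<otimes> x"
proof -
  obtain i j :: int where "x = g [^] i" "y = g [^] j"
    using assms generate_pow by auto
  then show ?thesis
    using assms(1) by (simp flip: int_pow_mult add: add.commute)
qed

lemma common_cyclic_refl: "x \<in> carrier G \<Longrightarrow> common_cyclic G x x"
  unfolding common_cyclic_def using generate.incl[of x "{x}" G] by blast

lemma common_cyclic_imp_commute: "common_cyclic G x y \<Longrightarrow> x \<otimes> y = y \<otimes> x"
  unfolding common_cyclic_def using generate_singleton_commute by blast

lemma subgroup_nat_pow_closed: "subgroup H G \<Longrightarrow> h \<in> H \<Longrightarrow> h [^] (k::nat) \<in> H"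
  using subgroup_int_pow_closed[of H h "int k"] by (simp add: int_pow_int)

lemma nat_pow_mem_generate_singleton: "g \<in> carrier G \<Longrightarrow> g [^] (k::nat) \<in> generate G {g}"
  using subgroup_nat_pow_closed[OF generate_is_subgroup generate.incl[of g "{g}"]] by simp

lemma subgroup_of_cyclic_subgroup_is_cyclic:
  assumes fin: "finite (carrier G)" and g: "g \<in> carrier G"
    and K: "subgroup K G" "K \<subseteq> generate G {g}"
  shows "\<exists>h\<in>carrier G. K = generate G {h}"
proof -
  have powers: "\<exists>k::nat. x = g [^] k" if "x \<in> K" for x
    using that K(2) generate_pow_on_finite_carrier[OF fin g] by auto
  have "0 < ord g \<and> g [^] ord g \<in> K"
    using ord_ge_1[OF fin g] g subgroup.one_closed[OF K(1)] by simp
  then have ex: "\<exists>m::nat. 0 < m \<and> g [^] m \<in> K" by blast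
  define m where "m = (LEAST m::nat. 0 < m \<and> g [^] m \<in> K)"
  have m: "0 < m" "g [^] m \<in> K"
    using LeastI_ex[OF ex] unfolding m_def by auto
  have m_least: "g [^] r \<notin> K" if "0 < r" "r < m" for r :: nat
    using not_less_Least that unfolding m_def by blast
  have "K \<subseteq> generate G {g [^] m}"
  proof
    fix x assume "x \<in> K"
    then obtain j :: nat where j: "x = g [^] j" using powers by blast
    have gm: "g [^] m \<in> carrier G" using g by simp
    have split: "x = (g [^] m) [^] (j div m) \<otimes> g [^] (j mod m)"
      unfolding j using g by (simp add: nat_pow_pow nat_pow_mult)
    have q_in_K: "(g [^] m) [^] (j div m) \<in> K"
      using K(1) m(2) by (rule subgroup_nat_pow_closed)
    have "g [^] (j mod m) = inv ((g [^] m) [^] (j div m)) \<otimes> x"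
      using split g by (simp add: inv_solve_left del: nat_pow_pow)
    then have "g [^] (j mod m) \<in> K"
      using K(1) q_in_K \<open>x \<in> K\<close> by (simp add: subgroup.m_closed subgroup.m_inv_closed)
    then have "j mod m = 0" using m_least[of "j mod m"] m(1) by auto
    then have "x = (g [^] m) [^] (j div m)" using split g by simp
    then show "x \<in> generate G {g [^] m}"
      using gm nat_pow_mem_generate_singleton by simp
  qed
  moreover have "generate G {g [^] m} \<subseteq> K"
    using m K(1) by (simp add: generate_subgroup_incl)
  ultimately show ?thesis using g by blast
qed

lemma cyclic_subgroup_generated_pair_iff:
  assumes fin: "finite (carrier G)" and x: "x \<in> carrier G" and y: "y \<in> carrier G"
  shows "cyclic_group (subgroup_generated G {x, y}) \<longleftrightarrow> common_cyclic G x y"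
proof
  let ?K = "subgroup_generated G {x, y}"
  have carrier_K: "carrier ?K = generate G {x, y}"
    using x y by (simp add: carrier_subgroup_generated Int_absorb1)
  assume "cyclic_group ?K"
  then obtain w where w: "w \<in> carrier ?K" "carrier ?K = range (\<lambda>k::int. w [^]\<^bsub>?K\<^esub> k)"
    using group.cyclic_group[OF group_subgroup_generated] by blast
  have wG: "w \<in> carrier G"
    using w(1) carrier_K generate_incl[of "{x, y}"] x y by auto
  have "x \<in> carrier ?K" "y \<in> carrier ?K"
    using carrier_K by (auto intro: generate.incl)
  then have "x \<in> generate G {w}" "y \<in> generate G {w}"
    using w(2) int_pow_subgroup_generated[OF w(1)] generate_pow[OF wG] by auto
  then show "common_cyclic G x y" using wG unfolding common_cyclic_def by blast
next
  assume "common_cyclic G x y"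
  then obtain g where g: "g \<in> carrier G" "x \<in> generate G {g}" "y \<in> generate G {g}"
    unfolding common_cyclic_def by blast
  have "generate G {x, y} \<subseteq> generate G {g}"
    using g by (simp add: generate_is_subgroup generate_subgroup_incl)
  moreover have "subgroup (generate G {x, y}) G"
    using x y by (simp add: generate_is_subgroup)
  ultimately obtain h where h: "h \<in> carrier G" "generate G {x, y} = generate G {h}"
    using subgroup_of_cyclic_subgroup_is_cyclic[OF fin g(1)] by blast
  then have "subgroup_generated G {x, y} = subgroup_generated G {h}"
    using x y unfolding subgroup_generated_def by (simp add: Int_absorb1)
  then show "cyclic_group (subgroup_generated G {x, y})"
    using cyclic_group_generated by simp
qed

lemma pe_adj_iff_common_cyclic:
  assumes "finite (carrier G)" "x \<in> carrier G" "y \<in> carrier G"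
  shows "pe_adj G x y \<longleftrightarrow> x \<noteq> y \<and> common_cyclic G x y"
  using cyclic_subgroup_generated_pair_iff[OF assms] unfolding pe_adj_def by blast

lemma generate_singleton_eq_of_ord_le:
  assumes fin: "finite (carrier G)" and g: "g \<in> carrier G"
    and a: "a \<in> generate G {g}" and ord_le: "ord g \<le> ord a"
  shows "generate G {a} = generate G {g}"
proof -
  have aG: "a \<in> carrier G"
    using a generate_incl[of "{g}"] g by blast
  have sub: "generate G {a} \<subseteq> generate G {g}"
    using a g by (simp add: generate_is_subgroup generate_subgroup_incl)
  have fin_g: "finite (generate G {g})"
    using fin generate_incl[of "{g}"] g finite_subset by blast
  have "card (generate G {g}) \<le> card (generate G {a})"
    using ord_le unfolding generate_pow_card[OF g] generate_pow_card[OF aG] .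
  then show ?thesis
    using card_seteq[OF fin_g sub] by blast
qed

lemma inv_mult_cancel_left: "x \<in> carrier G \<Longrightarrow> y \<in> carrier G \<Longrightarrow> inv x \<otimes> (x \<otimes> y) = y"
  by (simp flip: m_assoc)

lemma subgroup_mult_mem_iff_left:
  assumes H: "subgroup H G" and x: "x \<in> H" and y: "y \<in> carrier G"
  shows "x \<otimes> y \<in> H \<longleftrightarrow> y \<in> H"
proof
  assume "x \<otimes> y \<in> H"
  moreover have "y = inv x \<otimes> (x \<otimes> y)"
    using x y subgroup.mem_carrier[OF H] by (simp add: m_assoc[symmetric])
  ultimately show "y \<in> H" using H x by (metis subgroup.m_closed subgroup.m_inv_closed)
qed (use H x in \<open>simp add: subgroup.m_closed\<close>)

lemma subgroup_mult_mem_iff_right: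
  assumes H: "subgroup H G" and y: "y \<in> H" and x: "x \<in> carrier G"
  shows "x \<otimes> y \<in> H \<longleftrightarrow> x \<in> H"
proof
  assume "x \<otimes> y \<in> H"
  moreover have "x = (x \<otimes> y) \<otimes> inv y"
    using x y subgroup.mem_carrier[OF H] by (simp add: m_assoc)
  ultimately show "x \<in> H" using H y by (metis subgroup.m_closed subgroup.m_inv_closed)
qed (use H y in \<open>simp add: subgroup.m_closed\<close>)

lemma square_mem_index_two_subgroup:
  assumes fin: "finite (carrier G)" and H: "subgroup H G" and K: "subgroup K G"
    and HK: "H \<subseteq> K" and card_K: "card K = 2 * card H" and x: "x \<in> K"
  shows "x \<otimes> x \<in> H"
proof (rule ccontr)
  interpret H: subgroup H G by (rule H)
  interpret K: subgroup K G by (rule K)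
  assume sq_notin: "x \<otimes> x \<notin> H"
  have xG: "x \<in> carrier G" using x by (rule K.mem_carrier)
  have x_notin: "x \<notin> H" using sq_notin H.m_closed by blast
  let ?xH = "(\<lambda>h. x \<otimes> h) ` H"
  have "?xH \<subseteq> K" using x HK K.m_closed by blast
  moreover have "?xH \<inter> H = {}"
    using subgroup_mult_mem_iff_right[OF H _ xG] x_notin by blast
  moreover have "inj_on (\<lambda>h. x \<otimes> h) H"
  proof (rule inj_onI)
    fix a b assume "a \<in> H" "b \<in> H" "x \<otimes> a = x \<otimes> b"
    then show "a = b" using xG by simp
  qed
  then have "card ?xH = card H" by (rule card_image)
  moreover have fin_K: "finite K" using fin K.subset finite_subset by blast
  ultimately have "?xH \<union> H = K"
    using card_K HK finite_subset[OF HK fin_K] finite_subset[of ?xH K]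
    by (intro card_seteq) (simp_all add: card_Un_disjoint)
  moreover have "x \<otimes> x \<in> K" using x K.m_closed by blast
  ultimately obtain h where "h \<in> H" "x \<otimes> x = x \<otimes> h"
    using sq_notin by blast
  then show False using x_notin xG by simp
qed

lemma square_root_of_one_in_cyclic:
  assumes a: "a \<in> carrier G" and ord_a: "ord a = 2 * m"
    and y: "y \<in> generate G {a}" and y_sq: "y \<otimes> y = \<one>"
  shows "y = \<one> \<or> y = a [^] m"
proof -
  obtain k :: int where k: "y = a [^] k" using y generate_pow[OF a] by auto
  have "a [^] (2 * k) = \<one>"
    unfolding mult_2 int_pow_mult[OF a] using y_sq k by simp
  then have "int (2 * m) dvd 2 * k" using int_pow_eq_id[OF a] ord_a by simp
  then have "int m dvd k" by simp
  then obtain j where j: "k = int m * j" by (rule dvdE)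
  have "int (2 * m) dvd int m * (j mod 2) - int m * j"
  proof -
    have "int m * (j mod 2) - int m * j = int (2 * m) * - (j div 2)"
      by (simp add: algebra_simps flip: minus_mod_eq_mult_div)
    then show ?thesis by simp
  qed
  then have "y = a [^] (int m * (j mod 2))"
    using int_pow_eq[OF a] ord_a k j by simp
  moreover have "j mod 2 = 0 \<or> j mod 2 = 1" by presburger
  ultimately show ?thesis by (auto simp: int_pow_int)
qed

lemma hom_DirProd_commuting:
  assumes f: "f \<in> hom A G" and g: "g \<in> hom B G"
    and commute: "\<And>a b. a \<in> carrier A \<Longrightarrow> b \<in> carrier B \<Longrightarrow> f a \<otimes> g b = g b \<otimes> f a"
  shows "(\<lambda>(a, b). f a \<otimes> g b) \<in> hom (A \<times>\<times> B) G"
proof (rule homI)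
  fix p q assume "p \<in> carrier (A \<times>\<times> B)" "q \<in> carrier (A \<times>\<times> B)"
  then obtain a b a' b' where pq: "p = (a, b)" "q = (a', b')"
    and in_carrier: "a \<in> carrier A" "b \<in> carrier B" "a' \<in> carrier A" "b' \<in> carrier B"
    by auto
  have carrier_G: "f a \<in> carrier G" "g b \<in> carrier G" "f a' \<in> carrier G" "g b' \<in> carrier G"
    using in_carrier f g by (simp_all add: hom_in_carrier)
  have "f a \<otimes> f a' \<otimes> (g b \<otimes> g b') = f a \<otimes> (f a' \<otimes> g b) \<otimes> g b'"
    using carrier_G by (simp add: m_assoc)
  also have "\<dots> = f a \<otimes> g b \<otimes> (f a' \<otimes> g b')"
    using carrier_G commute[OF in_carrier(3,2)] by (simp add: m_assoc)
  finally show "(\<lambda>(a, b). f a \<otimes> g b) (p \<otimes>\<^bsub>A \<times>\<times> B\<^esub> q)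
      = (\<lambda>(a, b). f a \<otimes> g b) p \<otimes> (\<lambda>(a, b). f a \<otimes> g b) q"
    using pq in_carrier f g by (simp add: hom_mult)
qed (use f g in \<open>auto simp: hom_in_carrier\<close>)

lemma int_pow_hom_integer_mod_group:
  assumes a: "a \<in> carrier G" and "a [^] n = \<one>"
  shows "(\<lambda>k. a [^] k) \<in> hom (integer_mod_group n) G"
proof (rule homI)
  fix k l :: int
  have "int (ord a) dvd int n" using assms pow_eq_id by simp
  then have "int (ord a) dvd (k + l) - (k + l) mod int n"
    using minus_mod_eq_mult_div by (metis dvd_mult2)
  then have "a [^] ((k + l) mod int n) = a [^] (k + l)"
    using int_pow_eq[OF a] by simp
  then show "a [^] (k \<otimes>\<^bsub>integer_mod_group n\<^esub> l) = a [^] k \<otimes> a [^] l"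
    using a by (simp add: int_pow_mult)
qed (use a in auto)

end

lemma iso_imp_pe_graph_iso:
  assumes "group G" "group H" "G \<cong> H"
  shows "pe_graph_iso G H"
proof -
  obtain h where h: "h \<in> iso G H" using assms(3) unfolding is_iso_def by blast
  have hom: "group_hom G H h"
    using h assms by (simp add: group_hom_def group_hom_axioms_def iso_def)
  have bij: "bij_betw h (carrier G) (carrier H)" using h by (simp add: iso_def)
  have "pe_adj G x y \<longleftrightarrow> pe_adj H (h x) (h y)" if "x \<in> carrier G" "y \<in> carrier G" for x y
  proof -
    have "x \<noteq> y \<longleftrightarrow> h x \<noteq> h y"
      using bij that by (metis bij_betw_def inj_on_def)
    moreover have "h \<in> iso (subgroup_generated G {x, y}) (subgroup_generated H {h x, h y})"
      using group_hom.iso_between_subgroups[OF hom h, of "{x, y}" "{h x, h y}"] that by auto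
    then have "subgroup_generated G {x, y} \<cong> subgroup_generated H {h x, h y}"
      unfolding is_iso_def by blast
    then have "cyclic_group (subgroup_generated G {x, y}) \<longleftrightarrow> cyclic_group (subgroup_generated H {h x, h y})"
      using isomorphic_group_cyclicity group.group_subgroup_generated[OF assms(1)]
        group.group_subgroup_generated[OF assms(2)] by blast
    ultimately show ?thesis unfolding pe_adj_def by blast
  qed
  then show ?thesis unfolding pe_graph_iso_def using bij by blast
qed

lemma pe_graph_iso_common_cyclic:
  assumes G: "group G" "finite (carrier G)" and H: "group H" "finite (carrier H)"
    and f: "bij_betw f (carrier G) (carrier H)"
    and adj: "\<And>x y. x \<in> carrier G \<Longrightarrow> y \<in> carrier G \<Longrightarrow> pe_adj G x y \<longleftrightarrow> pe_adj H (f x) (f y)"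
    and x: "x \<in> carrier G" and y: "y \<in> carrier G"
  shows "common_cyclic G x y \<longleftrightarrow> common_cyclic H (f x) (f y)"
proof -
  have fxy: "f x \<in> carrier H" "f y \<in> carrier H"
    using f x y bij_betwE by blast+
  show ?thesis
  proof (cases "x = y")
    case True
    then show ?thesis
      using group.common_cyclic_refl[OF G(1) x] group.common_cyclic_refl[OF H(1) fxy(1)] by simp
  next
    case False
    then have "f x \<noteq> f y" using f x y by (metis bij_betw_def inj_on_def)
    then show ?thesis
      using False adj[OF x y] group.pe_adj_iff_common_cyclic[OF G(1,2) x y]
        group.pe_adj_iff_common_cyclic[OF H(1,2) fxy] by simp
  qed
qed

lemma pow_DirProd: "(a, b) [^]\<^bsub>G \<times>\<times> H\<^esub> (m::nat) = (a [^]\<^bsub>G\<^esub> m, b [^]\<^bsub>H\<^esub> m)"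
  by (induction m) auto

section \<open>The group \<open>Q\<^sub>8 \<times> \<int>\<^sub>n\<close>\<close>

lemma less_4_cases: "(a::nat) < 4 \<Longrightarrow> a = 0 \<or> a = 1 \<or> a = 2 \<or> a = 3"
  by auto

lemma all_less_4: "(\<forall>a::nat<4. P a) \<longleftrightarrow> P 0 \<and> P 1 \<and> P 2 \<and> P 3"
  by (auto dest!: less_4_cases)

lemma carrier_Q8: "carrier Q8 = UNIV \<times> {0..<4}"
  by (simp add: Q8_def)

lemma one_Q8: "\<one>\<^bsub>Q8\<^esub> = (False, 0)"
  by (simp add: Q8_def)

lemma mult_Q8:
  "(s, a) \<otimes>\<^bsub>Q8\<^esub> (t, b) = (s \<noteq> (t \<noteq> fst (q_unit_mult a b)), snd (q_unit_mult a b))"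
  by (simp add: Q8_def)

lemma q_unit_mult_less_4: "a < 4 \<Longrightarrow> b < 4 \<Longrightarrow> snd (q_unit_mult a b) < 4"
  by (auto dest!: less_4_cases simp: q_unit_mult_def)

lemma q_unit_mult_assoc:
  "\<forall>a<4. \<forall>b<4. \<forall>c<4.
     snd (q_unit_mult (snd (q_unit_mult a b)) c) = snd (q_unit_mult a (snd (q_unit_mult b c))) \<and>
     (fst (q_unit_mult a b) \<noteq> fst (q_unit_mult (snd (q_unit_mult a b)) c)) =
     (fst (q_unit_mult b c) \<noteq> fst (q_unit_mult a (snd (q_unit_mult b c))))"
  unfolding all_less_4 by (simp add: q_unit_mult_def)

lemma group_Q8: "group Q8"
proof (rule groupI)
  fix x y assume "x \<in> carrier Q8" "y \<in> carrier Q8"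
  then show "x \<otimes>\<^bsub>Q8\<^esub> y \<in> carrier Q8"
    by (cases x, cases y) (auto simp: mult_Q8 carrier_Q8 q_unit_mult_less_4)
next
  fix x y z assume "x \<in> carrier Q8" "y \<in> carrier Q8" "z \<in> carrier Q8"
  then obtain s a t b r c where xyz: "x = (s, a)" "y = (t, b)" "z = (r, c)" "a < 4" "b < 4" "c < 4"
    by (auto simp: carrier_Q8)
  show "x \<otimes>\<^bsub>Q8\<^esub> y \<otimes>\<^bsub>Q8\<^esub> z = x \<otimes>\<^bsub>Q8\<^esub> (y \<otimes>\<^bsub>Q8\<^esub> z)"
    using q_unit_mult_assoc xyz(4-6) unfolding xyz by (simp add: mult_Q8) blast
next
  fix x assume "x \<in> carrier Q8"
  then show "\<one>\<^bsub>Q8\<^esub> \<otimes>\<^bsub>Q8\<^esub> x = x"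
    by (cases x) (simp add: one_Q8 mult_Q8 q_unit_mult_def)
next
  fix x assume "x \<in> carrier Q8"
  then obtain s a where x: "x = (s, a)" "a < 4" by (auto simp: carrier_Q8)
  show "\<exists>y\<in>carrier Q8. y \<otimes>\<^bsub>Q8\<^esub> x = \<one>\<^bsub>Q8\<^esub>"
  proof (cases "a = 0")
    case True
    then show ?thesis using x
      by (intro bexI[of _ "(s, 0)"]) (auto simp: mult_Q8 one_Q8 carrier_Q8 q_unit_mult_def)
  next
    case False
    then show ?thesis using x
      by (intro bexI[of _ "(\<not> s, a)"]) (auto simp: mult_Q8 one_Q8 carrier_Q8 q_unit_mult_def)
  qed
qed (simp add: one_Q8 carrier_Q8)

lemma Q8_commute_imp_axes:
  assumes "a < 4" "b < 4" and "(s, a) \<otimes>\<^bsub>Q8\<^esub> (t, b) = (t, b) \<otimes>\<^bsub>Q8\<^esub> (s, a)"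
  shows "a = 0 \<or> b = 0 \<or> a = b"
  using assms by (auto dest!: less_4_cases simp: mult_Q8 q_unit_mult_def)

lemma pow_Q8_unit:
  assumes "w \<noteq> 0" "w < 4"
  shows "(False, w) [^]\<^bsub>Q8\<^esub> (m::nat) = (2 \<le> m mod 4, if odd m then w else 0)"
proof (induction m)
  case 0
  then show ?case by (simp add: one_Q8)
next
  case (Suc m)
  then have "(False, w) [^]\<^bsub>Q8\<^esub> Suc m = (2 \<le> m mod 4, if odd m then w else 0) \<otimes>\<^bsub>Q8\<^esub> (False, w)"
    by simp
  also have "\<dots> = (2 \<le> Suc m mod 4, if odd (Suc m) then w else 0)"
    using assms by (auto simp: mult_Q8 q_unit_mult_def mod_Suc) presburger+
  finally show ?case .
qed

abbreviation Q8_Zn :: "nat \<Rightarrow> ((bool \<times> nat) \<times> int) monoid" where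
  "Q8_Zn n \<equiv> Q8 \<times>\<times> integer_mod_group n"

definition axis :: "(bool \<times> nat) \<times> int \<Rightarrow> nat" where
  "axis x = snd (fst x)"

lemma group_Q8_Zn: "group (Q8_Zn n)"
  by (simp add: DirProd_group group_Q8)

lemma card_axis_class:
  assumes "n > 0" "i < 4"
  shows "card {x \<in> carrier (Q8_Zn n). axis x = i} = 2 * n"
proof -
  have "{x \<in> carrier (Q8_Zn n). axis x = i} = (UNIV \<times> {i}) \<times> {0..<int n}"
    using assms by (auto simp: carrier_Q8 carrier_integer_mod_group axis_def)
  then show ?thesis by (simp add: card_cartesian_product)
qed

lemma card_carrier_Q8_Zn: "n > 0 \<Longrightarrow> card (carrier (Q8_Zn n)) = 8 * n"
  by (simp add: carrier_Q8 carrier_integer_mod_group card_cartesian_product)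

lemma exists_exponent_mod_4_mod_odd:
  fixes n :: nat
  assumes "odd n"
  shows "\<exists>m. m mod 4 = a mod 4 \<and> m mod n = k mod n"
proof -
  obtain t where t: "n = 2 * t + 1" using assms oddE by blast
  \<comment> \<open>\<open>n\<^sup>2 \<equiv> 1 (mod 4)\<close> and \<open>(n + 1)\<^sup>2 \<equiv> 1 (mod n)\<close>\<close>
  define m where "m = a * n * n + k * (n + 1) * (n + 1)"
  have "m = a + 4 * (a * (t * t + t) + k * (t + 1) * (t + 1))"
    unfolding m_def t by (simp add: algebra_simps)
  then have "m mod 4 = a mod 4" by (metis mod_mult_self2)
  moreover have "m = k + n * (a * n + k * (n + 2))"
    unfolding m_def by (simp add: algebra_simps)
  then have "m mod n = k mod n" by (metis mod_mult_self2)
  ultimately show ?thesis by blast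
qed

lemma generate_axis_generator:
  assumes n: "odd n" and w: "w \<noteq> 0" "w < 4"
    and x: "x \<in> carrier (Q8_Zn n)" "axis x = 0 \<or> axis x = w"
  shows "x \<in> generate (Q8_Zn n) {((False, w), 1 mod int n)}"
proof -
  have "n > 0" using n by (rule odd_pos)
  then obtain s u k where x_eq: "x = ((s, u), k)" "0 \<le> k" "k < int n" "u = 0 \<or> u = w"
    using x by (cases x) (auto simp: carrier_Q8 carrier_integer_mod_group axis_def)
  \<comment> \<open>\<open>(False, w) [^] a = (s, u)\<close> in \<open>Q\<^sub>8\<close>\<close>
  define a :: nat where "a = (if u = 0 then (if s then 2 else 0) else (if s then 3 else 1))"
  obtain m where m: "m mod 4 = a mod 4" "m mod n = nat k mod n"
    using exists_exponent_mod_4_mod_odd[OF n] by blast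
  have m_mod_4: "m mod 4 = a" using m(1) a_def by simp
  then have parity: "odd m \<longleftrightarrow> odd a" by presburger
  have "int m * (1 mod int n) mod int n = int m mod int n"
    by (simp add: mod_mult_right_eq)
  also have "\<dots> = k"
    using m(2) x_eq by (metis mod_pos_pos_trivial nat_eq_iff of_nat_mod)
  finally have "((False, w), 1 mod int n) [^]\<^bsub>Q8_Zn n\<^esub> m = x"
    unfolding pow_DirProd pow_Q8_unit[OF w] pow_integer_mod_group
    using m_mod_4 parity x_eq a_def by (auto split: if_splits)
  moreover have "((False, w), 1 mod int n) \<in> carrier (Q8_Zn n)"
    using w \<open>n > 0\<close> by (simp add: carrier_Q8 carrier_integer_mod_group)
  ultimately show ?thesis
    using group.nat_pow_mem_generate_singleton[OF group_Q8_Zn] by metis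
qed

lemma common_cyclic_Q8_Zn:
  assumes n: "odd n" and x: "x \<in> carrier (Q8_Zn n)" and y: "y \<in> carrier (Q8_Zn n)"
  shows "common_cyclic (Q8_Zn n) x y \<longleftrightarrow> axis x = 0 \<or> axis y = 0 \<or> axis x = axis y"
proof
  assume "common_cyclic (Q8_Zn n) x y"
  then have "x \<otimes>\<^bsub>Q8_Zn n\<^esub> y = y \<otimes>\<^bsub>Q8_Zn n\<^esub> x"
    by (rule group.common_cyclic_imp_commute[OF group_Q8_Zn])
  moreover obtain s u k t v l where xy: "x = ((s, u), k)" "y = ((t, v), l)" "u < 4" "v < 4"
    using x y by (cases x, cases y) (auto simp: carrier_Q8)
  ultimately have "(s, u) \<otimes>\<^bsub>Q8\<^esub> (t, v) = (t, v) \<otimes>\<^bsub>Q8\<^esub> (s, u)"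
    by simp
  then show "axis x = 0 \<or> axis y = 0 \<or> axis x = axis y"
    using Q8_commute_imp_axes xy by (simp add: axis_def)
next
  assume classes: "axis x = 0 \<or> axis y = 0 \<or> axis x = axis y"
  define w where "w = (if axis x \<noteq> 0 then axis x else if axis y \<noteq> 0 then axis y else 1)"
  have "axis x < 4" "axis y < 4"
    using x y by (auto simp: carrier_Q8 axis_def)
  then have w: "w \<noteq> 0" "w < 4" unfolding w_def by auto
  let ?g = "((False, w), 1 mod int n)"
  have "x \<in> generate (Q8_Zn n) {?g}" "y \<in> generate (Q8_Zn n) {?g}"
    using generate_axis_generator[OF n w] x y classes unfolding w_def by auto
  moreover have "?g \<in> carrier (Q8_Zn n)"
    using w odd_pos[OF n] by (simp add: carrier_Q8 carrier_integer_mod_group)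
  ultimately show "common_cyclic (Q8_Zn n) x y"
    unfolding common_cyclic_def by blast
qed

section \<open>Groups with the enhanced power graph of \<open>Q\<^sub>8 \<times> \<int>\<^sub>n\<close>\<close>

text \<open>The parameter \<open>cl\<close> plays the role of \<^const>\<open>axis\<close> transported along an isomorphism
  of enhanced power graphs onto \<open>Q\<^sub>8 \<times> \<int>\<^sub>n\<close> (see \<open>Q8_Zn_pe_graph_pullback\<close>).\<close>
locale Q8_Zn_pe_graph = group G for G (structure) +
  fixes cl :: "'a \<Rightarrow> nat" and n :: nat
  assumes finite_carrier: "finite (carrier G)"
    and odd_n: "odd n"
    and cl_less_4: "x \<in> carrier G \<Longrightarrow> cl x < 4"
    and common_cyclic_iff:
      "x \<in> carrier G \<Longrightarrow> y \<in> carrier G \<Longrightarrow> common_cyclic G x y \<longleftrightarrow> cl x = 0 \<or> cl y = 0 \<or> cl x = cl y"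
    and card_class: "i < 4 \<Longrightarrow> card {x \<in> carrier G. cl x = i} = 2 * n"
begin

lemma n_pos: "n > 0"
  using odd_n by (rule odd_pos)

lemma class_nonempty:
  assumes "i < 4"
  obtains x where "x \<in> carrier G" "cl x = i"
proof -
  have "card {x \<in> carrier G. cl x = i} \<noteq> 0"
    using card_class[OF assms] n_pos by simp
  then have "{x \<in> carrier G. cl x = i} \<noteq> {}"
    by (metis card.empty)
  then show ?thesis using that by blast
qed

lemma card_carrier: "card (carrier G) = 8 * n"
proof -
  have "carrier G = (\<Union>i<4. {x \<in> carrier G. cl x = i})"
    using cl_less_4 by auto
  moreover have "card (\<Union>i<4. {x \<in> carrier G. cl x = i}) = (\<Sum>i<4. card {x \<in> carrier G. cl x = i})"
    using finite_carrier by (intro card_UN_disjoint) auto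
  ultimately have "card (carrier G) = (\<Sum>i<4. card {x \<in> carrier G. cl x = i})"
    by simp
  also have "\<dots> = 8 * n"
    by (simp add: card_class)
  finally show ?thesis .
qed

lemma generate_singleton_subset_class:
  assumes "a \<in> carrier G" "cl a \<noteq> 0"
  shows "generate G {a} \<subseteq> {x \<in> carrier G. cl x = 0 \<or> cl x = cl a}"
proof
  fix x assume x: "x \<in> generate G {a}"
  then have "x \<in> carrier G" using assms generate_incl[of "{a}"] by blast
  moreover have "common_cyclic G a x"
    using assms x generate.incl[of a "{a}"] unfolding common_cyclic_def by blast
  ultimately show "x \<in> {x \<in> carrier G. cl x = 0 \<or> cl x = cl a}"
    using common_cyclic_iff assms cl_less_4 by auto
qed

text \<open>If \<open>cl g = 0\<close>, then \<open>g\<close>, and with it \<open>a\<close>, would share a cyclic subgroup with an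
  element of a third class.\<close>
lemma generator_class:
  assumes g: "g \<in> carrier G" and a: "a \<in> generate G {g}" and "cl a \<noteq> 0"
  shows "cl g = cl a"
proof -
  have aG: "a \<in> carrier G" using a g generate_incl[of "{g}"] by blast
  have "common_cyclic G g a"
    using g a generate.incl[of g "{g}"] unfolding common_cyclic_def by blast
  then have "cl g = 0 \<or> cl g = cl a"
    using common_cyclic_iff[OF g aG] \<open>cl a \<noteq> 0\<close> by auto
  moreover have "cl g \<noteq> 0"
  proof
    assume "cl g = 0"
    define j where "j = (if cl a = 1 then 2 else 1 :: nat)"
    have "j < 4" unfolding j_def by simp
    then obtain b where b: "b \<in> carrier G" "cl b = j"
      by (rule class_nonempty)
    have "common_cyclic G g b" using common_cyclic_iff[OF g b(1)] \<open>cl g = 0\<close> by simp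
    then obtain h where h: "h \<in> carrier G" "g \<in> generate G {h}" "b \<in> generate G {h}"
      unfolding common_cyclic_def by blast
    have "a \<in> generate G {h}"
      using a h(1,2) generate_subgroup_incl[of "{g}" "generate G {h}"] generate_is_subgroup[of "{h}"] by auto
    then have "common_cyclic G a b" using h unfolding common_cyclic_def by blast
    then show False
      using common_cyclic_iff[OF aG b(1)] b(2) \<open>cl a \<noteq> 0\<close> unfolding j_def
      by (auto split: if_splits)
  qed
  ultimately show ?thesis by blast
qed

lemma class_generator_exists:
  assumes i: "0 < i" "i < 4"
  shows "\<exists>a. a \<in> carrier G \<and> cl a = i \<and> generate G {a} = {x \<in> carrier G. cl x = 0 \<or> cl x = i}"
proof -
  let ?S = "{x \<in> carrier G. cl x = i}"
  have "finite (ord ` ?S)" "ord ` ?S \<noteq> {}"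
    using finite_carrier class_nonempty[OF i(2)] by auto
  then obtain a where a: "a \<in> ?S" "ord a = Max (ord ` ?S)"
    using Max_in by (metis (no_types, lifting) imageE)
  have a_max: "ord b \<le> ord a" if "b \<in> ?S" for b
    using a(2) \<open>finite (ord ` ?S)\<close> that by simp
  have aG: "a \<in> carrier G" and cl_a: "cl a = i" using a(1) by auto
  have "y \<in> generate G {a}" if y: "y \<in> carrier G" "cl y = 0 \<or> cl y = i" for y
  proof -
    have "common_cyclic G a y" using common_cyclic_iff[OF aG y(1)] cl_a y(2) by auto
    then obtain g where g: "g \<in> carrier G" "a \<in> generate G {g}" "y \<in> generate G {g}"
      unfolding common_cyclic_def by blast
    have "cl g = i" using generator_class[OF g(1,2)] cl_a i by simp
    then have "generate G {a} = generate G {g}"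
      using generate_singleton_eq_of_ord_le[OF finite_carrier g(1,2)] a_max g(1) by simp
    then show ?thesis using g(3) by simp
  qed
  then show ?thesis
    using generate_singleton_subset_class[OF aG] aG cl_a i by auto
qed

definition axis_gen :: "nat \<Rightarrow> 'a" where
  "axis_gen i = (SOME a. a \<in> carrier G \<and> cl a = i \<and> generate G {a} = {x \<in> carrier G. cl x = 0 \<or> cl x = i})"

abbreviation axis_subgroup :: "nat \<Rightarrow> 'a set" where
  "axis_subgroup i \<equiv> generate G {axis_gen i}"

definition dominant :: "'a set" where
  "dominant = {x \<in> carrier G. cl x = 0}"

lemma axis_gen:
  assumes "0 < i" "i < 4"
  shows "axis_gen i \<in> carrier G" "cl (axis_gen i) = i"
    and "axis_subgroup i = {x \<in> carrier G. cl x = 0 \<or> cl x = i}"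
  using someI_ex[OF class_generator_exists[OF assms]] unfolding axis_gen_def by auto

lemma axis_gen_carrier [simp]: "0 < i \<Longrightarrow> i < 4 \<Longrightarrow> axis_gen i \<in> carrier G"
  by (rule axis_gen(1))

lemma mem_axis_subgroup_iff:
  "0 < i \<Longrightarrow> i < 4 \<Longrightarrow> x \<in> axis_subgroup i \<longleftrightarrow> x \<in> carrier G \<and> (cl x = 0 \<or> cl x = i)"
  using axis_gen(3) by blast

lemma subgroup_axis_subgroup: "0 < i \<Longrightarrow> i < 4 \<Longrightarrow> subgroup (axis_subgroup i) G"
  using axis_gen(1) by (simp add: generate_is_subgroup)

lemma dominant_subset_axis_subgroup: "0 < i \<Longrightarrow> i < 4 \<Longrightarrow> dominant \<subseteq> axis_subgroup i"
  unfolding dominant_def using mem_axis_subgroup_iff by blast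

lemma subgroup_dominant: "subgroup dominant G"
proof -
  have "dominant = axis_subgroup 1 \<inter> axis_subgroup 2"
    unfolding dominant_def using mem_axis_subgroup_iff[of 1] mem_axis_subgroup_iff[of 2] by auto
  then show ?thesis
    using subgroups_Inter_pair subgroup_axis_subgroup by simp
qed

lemma dominant_commute:
  assumes "d \<in> dominant" "g \<in> carrier G"
  shows "d \<otimes> g = g \<otimes> d"
  using assms common_cyclic_iff common_cyclic_imp_commute unfolding dominant_def by blast

lemma card_dominant: "card dominant = 2 * n"
  unfolding dominant_def using card_class by simp

lemma ord_axis_gen:
  assumes i: "0 < i" "i < 4"
  shows "ord (axis_gen i) = 4 * n"
proof -
  have "axis_subgroup i = dominant \<union> {x \<in> carrier G. cl x = i}"
    using axis_gen(3)[OF i] unfolding dominant_def by auto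
  moreover have "dominant \<inter> {x \<in> carrier G. cl x = i} = {}"
    using i unfolding dominant_def by auto
  ultimately have "card (axis_subgroup i) = card dominant + card {x \<in> carrier G. cl x = i}"
    using finite_carrier unfolding dominant_def by (simp add: card_Un_disjoint)
  then show ?thesis
    using generate_pow_card[OF axis_gen(1)[OF i]] card_dominant card_class i by simp
qed

lemma axis_gen_pow_even:
  assumes i: "0 < i" "i < 4"
  shows "axis_gen i [^] (2 * (m::nat)) \<in> dominant"
proof -
  have "card (axis_subgroup i) = 2 * card dominant"
    using ord_axis_gen[OF i] generate_pow_card[OF axis_gen(1)[OF i]] card_dominant by simp
  moreover have "axis_gen i \<in> axis_subgroup i"
    by (rule generate.incl) simp
  ultimately have "axis_gen i \<otimes> axis_gen i \<in> dominant"
    using square_mem_index_two_subgroup[OF finite_carrier subgroup_dominant subgroup_axis_subgroup[OF i]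
        dominant_subset_axis_subgroup[OF i]] by simp
  moreover have "axis_gen i \<otimes> axis_gen i = axis_gen i [^] (2::nat)"
    using axis_gen(1)[OF i] by (simp add: numeral_2_eq_2)
  then have "axis_gen i [^] (2 * m) = (axis_gen i \<otimes> axis_gen i) [^] m"
    using axis_gen(1)[OF i] by (simp add: nat_pow_pow)
  ultimately show ?thesis
    using subgroup_nat_pow_closed[OF subgroup_dominant] by simp
qed

lemma axis_gen_pow_odd:
  assumes i: "0 < i" "i < 4"
  shows "axis_gen i [^] (2 * (m::nat) + 1) \<notin> dominant"
proof
  assume "axis_gen i [^] (2 * m + 1) \<in> dominant"
  then have "axis_gen i [^] (2 * m) \<otimes> axis_gen i \<in> dominant" by simp
  then have "axis_gen i \<in> dominant"
    using subgroup_mult_mem_iff_left[OF subgroup_dominant axis_gen_pow_even[OF i]] axis_gen(1)[OF i] by simp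
  then show False using axis_gen(2)[OF i] i unfolding dominant_def by simp
qed

lemma square_neq_one:
  assumes i: "0 < i" "i < 4" and x: "x \<in> axis_subgroup i" "x \<notin> dominant"
  shows "x \<otimes> x \<noteq> \<one>"
proof
  assume "x \<otimes> x = \<one>"
  then have "x = \<one> \<or> x = axis_gen i [^] (2 * n)"
    using square_root_of_one_in_cyclic[OF axis_gen(1)[OF i] _ x(1)] ord_axis_gen[OF i] by simp
  then show False
    using x(2) axis_gen_pow_even[OF i] subgroup.one_closed[OF subgroup_dominant] by auto
qed

definition qi :: 'a where "qi = axis_gen 1 [^] n"
definition qj :: 'a where "qj = axis_gen 2 [^] n"
definition qk :: 'a where "qk = qi \<otimes> qj"
definition neg_one :: 'a where "neg_one = axis_gen 1 [^] (2 * n)"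

lemma quaternion_carrier [simp]:
  "qi \<in> carrier G" "qj \<in> carrier G" "qk \<in> carrier G" "neg_one \<in> carrier G"
  by (simp_all add: qi_def qj_def qk_def neg_one_def)

lemma qi_qj_notin_dominant: "qi \<notin> dominant" "qj \<notin> dominant"
proof -
  obtain t where "n = 2 * t + 1" using odd_n oddE by blast
  then show "qi \<notin> dominant" "qj \<notin> dominant"
    unfolding qi_def qj_def using axis_gen_pow_odd[of 1 t] axis_gen_pow_odd[of 2 t] by simp_all
qed

lemma qi_qj_axis_subgroup: "qi \<in> axis_subgroup 1" "qj \<in> axis_subgroup 2"
  unfolding qi_def qj_def by (simp_all add: nat_pow_mem_generate_singleton)

lemma cl_qi_qj: "cl qi = 1" "cl qj = 2"
  using qi_qj_axis_subgroup qi_qj_notin_dominant mem_axis_subgroup_iff[of 1] mem_axis_subgroup_iff[of 2]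
  unfolding dominant_def by auto

lemma neg_one_dominant: "neg_one \<in> dominant"
  unfolding neg_one_def using axis_gen_pow_even[of 1 n] by simp

lemma axis_gen_pow_2n:
  assumes i: "0 < i" "i < 4"
  shows "axis_gen i [^] (2 * n) \<noteq> \<one>" "axis_gen i [^] (2 * n) \<otimes> axis_gen i [^] (2 * n) = \<one>"
proof -
  show "axis_gen i [^] (2 * n) \<noteq> \<one>"
  proof
    assume "axis_gen i [^] (2 * n) = \<one>"
    then have "4 * n dvd 2 * n" using pow_eq_id ord_axis_gen[OF i] i by simp
    then show False using n_pos by (auto dest: dvd_imp_le)
  qed
  show "axis_gen i [^] (2 * n) \<otimes> axis_gen i [^] (2 * n) = \<one>"
    using ord_axis_gen[OF i] i by (simp add: nat_pow_mult pow_eq_id)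
qed

lemma neg_one_neq_one: "neg_one \<noteq> \<one>"
  unfolding neg_one_def using axis_gen_pow_2n(1)[of 1] by simp

lemma neg_one_square: "neg_one \<otimes> neg_one = \<one>"
  unfolding neg_one_def using axis_gen_pow_2n(2)[of 1] by simp

lemma qi_square: "qi \<otimes> qi = neg_one"
  unfolding qi_def neg_one_def by (simp add: nat_pow_mult mult_2)

text \<open>Both sides are involutions of the cyclic group \<open>axis_subgroup 1\<close>, which has only one.\<close>
lemma axis_gen_2_pow_2n: "axis_gen 2 [^] (2 * n) = neg_one"
proof -
  let ?y = "axis_gen 2 [^] (2 * n)"
  have "?y \<in> axis_subgroup 1"
    using axis_gen_pow_even[of 2 n] dominant_subset_axis_subgroup[of 1] by auto
  then show ?thesis
    using square_root_of_one_in_cyclic[of "axis_gen 1" "2 * n" ?y] ord_axis_gen[of 1] axis_gen_pow_2n[of 2]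
    unfolding neg_one_def by simp
qed

lemma qj_square: "qj \<otimes> qj = neg_one"
  unfolding qj_def using axis_gen_2_pow_2n by (simp add: nat_pow_mult mult_2)

lemma cl_eq_3:
  assumes "x \<in> carrier G" "x \<notin> axis_subgroup 1" "x \<notin> axis_subgroup 2"
  shows "cl x = 3"
  using assms cl_less_4[of x] mem_axis_subgroup_iff[of 1 x] mem_axis_subgroup_iff[of 2 x] by auto

lemma cl_qk: "cl qk = 3"
proof (rule cl_eq_3)
  show "qk \<notin> axis_subgroup 1"
    using subgroup_mult_mem_iff_left[OF subgroup_axis_subgroup qi_qj_axis_subgroup(1)] cl_qi_qj
      mem_axis_subgroup_iff[of 1 qj] unfolding qk_def by simp
  show "qk \<notin> axis_subgroup 2"
    using subgroup_mult_mem_iff_right[OF subgroup_axis_subgroup qi_qj_axis_subgroup(2)] cl_qi_qj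
      mem_axis_subgroup_iff[of 2 qi] unfolding qk_def by simp
qed simp

lemma qk_axis_subgroup: "qk \<in> axis_subgroup 3" "qk \<notin> dominant"
  using cl_qk mem_axis_subgroup_iff[of 3 qk] unfolding dominant_def by auto

lemma neg_one_commute: "g \<in> carrier G \<Longrightarrow> neg_one \<otimes> g = g \<otimes> neg_one"
  using dominant_commute neg_one_dominant by blast

lemma square_eq_neg_one_in_axis_subgroup_2:
  assumes u: "u \<in> axis_subgroup 2" and u_sq: "u \<otimes> u = neg_one"
  shows "u = qj \<or> u = neg_one \<otimes> qj"
proof -
  let ?v = "u \<otimes> inv qj"
  have uG: "u \<in> carrier G" using u mem_axis_subgroup_iff[of 2] by simp
  have qj_inv: "inv qj \<in> axis_subgroup 2"
    using qi_qj_axis_subgroup(2) subgroup.m_inv_closed[OF subgroup_axis_subgroup] by simp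
  have "?v \<in> axis_subgroup 2"
    using u qj_inv subgroup.m_closed[OF subgroup_axis_subgroup] by simp
  moreover have "?v \<otimes> ?v = \<one>"
  proof -
    have commute: "inv qj \<otimes> u = u \<otimes> inv qj"
      using generate_singleton_commute[OF axis_gen_carrier qj_inv u] by simp
    have "?v \<otimes> ?v = u \<otimes> (inv qj \<otimes> u) \<otimes> inv qj"
      using uG by (simp add: m_assoc)
    also have "\<dots> = (u \<otimes> u) \<otimes> (inv qj \<otimes> inv qj)"
      unfolding commute using uG by (simp add: m_assoc)
    also have "\<dots> = neg_one \<otimes> inv (qj \<otimes> qj)"
      using u_sq by (simp add: inv_mult_group)
    also have "\<dots> = \<one>"
      using qj_square by simp
    finally show ?thesis .
  qed
  ultimately have "?v = \<one> \<or> ?v = neg_one"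
    using square_root_of_one_in_cyclic[OF axis_gen_carrier, of 2 "2 * n" ?v] ord_axis_gen[of 2]
      axis_gen_2_pow_2n by simp
  moreover have "u = ?v \<otimes> qj" using uG by (simp add: m_assoc)
  ultimately show ?thesis using uG by auto
qed

lemma conj_qi_qj_cases: "qi \<otimes> qj \<otimes> inv qi = qj \<or> qi \<otimes> qj \<otimes> inv qi = neg_one \<otimes> qj"
proof (rule square_eq_neg_one_in_axis_subgroup_2)
  let ?u = "qi \<otimes> qj \<otimes> inv qi"
  have uG: "?u \<in> carrier G" by simp
  have u_qi: "?u \<otimes> qi = qk" unfolding qk_def by (simp add: m_assoc)
  have "?u \<notin> dominant"
  proof
    assume "?u \<in> dominant"
    then have "qi \<otimes> qj = qi \<otimes> ?u" using u_qi dominant_commute[of ?u qi] unfolding qk_def by simp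
    then show False using qi_qj_notin_dominant(2) \<open>?u \<in> dominant\<close> uG by simp
  qed
  moreover have "?u \<notin> axis_subgroup 1"
    using subgroup_mult_mem_iff_right[OF subgroup_axis_subgroup qi_qj_axis_subgroup(1) uG] u_qi
      qk_axis_subgroup cl_qk mem_axis_subgroup_iff[of 1 qk] by simp
  moreover have "?u \<notin> axis_subgroup 3"
    using subgroup_mult_mem_iff_left[OF subgroup_axis_subgroup _ quaternion_carrier(1), of 3 ?u] u_qi
      qk_axis_subgroup cl_qi_qj mem_axis_subgroup_iff[of 3 qi] by auto
  ultimately show "?u \<in> axis_subgroup 2"
    using uG cl_less_4[OF uG] mem_axis_subgroup_iff[of 1 ?u] mem_axis_subgroup_iff[of 2 ?u]
      mem_axis_subgroup_iff[of 3 ?u] unfolding dominant_def by auto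
  have "?u \<otimes> ?u = qi \<otimes> (qj \<otimes> qj) \<otimes> inv qi"
    by (simp add: m_assoc inv_mult_cancel_left)
  also have "\<dots> = qi \<otimes> neg_one \<otimes> inv qi"
    using qj_square by simp
  also have "\<dots> = neg_one"
    unfolding neg_one_commute[OF quaternion_carrier(1), symmetric] by (simp add: m_assoc)
  finally show "?u \<otimes> ?u = neg_one" .
qed

lemma qj_qi: "qj \<otimes> qi = neg_one \<otimes> qk"
proof -
  \<comment> \<open>Commuting \<open>qi\<close> and \<open>qj\<close> would make \<open>qk\<close> an involution outside \<^const>\<open>dominant\<close>.\<close>
  have "qi \<otimes> qj \<otimes> inv qi \<noteq> qj"
  proof
    assume "qi \<otimes> qj \<otimes> inv qi = qj"
    then have commute: "qi \<otimes> qj = qj \<otimes> qi"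
      by (metis inv_solve_right' quaternion_carrier(1,2) m_closed)
    have "qk \<otimes> qk = qi \<otimes> (qj \<otimes> qi) \<otimes> qj"
      unfolding qk_def by (simp add: m_assoc)
    also have "\<dots> = (qi \<otimes> qi) \<otimes> (qj \<otimes> qj)"
      unfolding commute[symmetric] by (simp add: m_assoc)
    finally have "qk \<otimes> qk = (qi \<otimes> qi) \<otimes> (qj \<otimes> qj)" .
    then have "qk \<otimes> qk = \<one>" using qi_square qj_square neg_one_square by simp
    then show False using square_neq_one[of 3 qk] qk_axis_subgroup by simp
  qed
  then have "qi \<otimes> qj \<otimes> inv qi = neg_one \<otimes> qj" using conj_qi_qj_cases by blast
  then have "qk = neg_one \<otimes> qj \<otimes> qi"
    unfolding qk_def by (simp add: inv_solve_right')
  then have "neg_one \<otimes> qk = (neg_one \<otimes> neg_one) \<otimes> (qj \<otimes> qi)" by (simp add: m_assoc)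
  then show ?thesis using neg_one_square by simp
qed

lemma qi_qk: "qi \<otimes> qk = neg_one \<otimes> qj"
  unfolding qk_def using qi_square by (simp flip: m_assoc)

lemma qk_qj: "qk \<otimes> qj = neg_one \<otimes> qi"
  unfolding qk_def using qj_square neg_one_commute[of qi] by (simp add: m_assoc)

lemma qk_qi: "qk \<otimes> qi = qj"
proof -
  have "qk \<otimes> qi = qi \<otimes> (qj \<otimes> qi)"
    unfolding qk_def by (simp add: m_assoc)
  also have "\<dots> = (qi \<otimes> neg_one) \<otimes> qk"
    by (simp add: qj_qi m_assoc)
  also have "\<dots> = neg_one \<otimes> (qi \<otimes> qk)"
    by (simp add: m_assoc flip: neg_one_commute)
  also have "\<dots> = qj"
    using neg_one_square by (simp add: qi_qk flip: m_assoc)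
  finally show ?thesis .
qed

lemma qj_qk: "qj \<otimes> qk = qi"
proof -
  have "qj \<otimes> qk = (qj \<otimes> qi) \<otimes> qj"
    unfolding qk_def by (simp add: m_assoc)
  also have "\<dots> = neg_one \<otimes> (qk \<otimes> qj)"
    by (simp add: qj_qi m_assoc)
  also have "\<dots> = qi"
    using neg_one_square by (simp add: qk_qj flip: m_assoc)
  finally show ?thesis .
qed

lemma qk_square: "qk \<otimes> qk = neg_one"
proof -
  have "qk \<otimes> qk = qk \<otimes> qi \<otimes> qj" unfolding qk_def by (simp add: m_assoc)
  then show ?thesis using qk_qi qj_square by simp
qed

definition q_sign :: "bool \<Rightarrow> 'a" where
  "q_sign s = (if s then neg_one else \<one>)"

definition q_unit :: "nat \<Rightarrow> 'a" where
  "q_unit u = (if u = 0 then \<one> else if u = 1 then qi else if u = 2 then qj else qk)"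

lemma q_sign_carrier [simp]: "q_sign s \<in> carrier G"
  by (simp add: q_sign_def)

lemma q_unit_carrier [simp]: "q_unit u \<in> carrier G"
  by (simp add: q_unit_def)

lemma q_sign_dominant: "q_sign s \<in> dominant"
  using neg_one_dominant subgroup.one_closed[OF subgroup_dominant] by (simp add: q_sign_def)

lemma q_sign_xor: "q_sign (s \<noteq> t) = q_sign s \<otimes> q_sign t"
  using neg_one_square by (simp add: q_sign_def)

lemma q_unit_notin_dominant: "0 < u \<Longrightarrow> u < 4 \<Longrightarrow> q_unit u \<notin> dominant"
  using qi_qj_notin_dominant qk_axis_subgroup(2) by (auto simp: q_unit_def)

lemma q_unit_mult:
  assumes "u < 4" "v < 4"
  shows "q_unit u \<otimes> q_unit v = q_sign (fst (q_unit_mult u v)) \<otimes> q_unit (snd (q_unit_mult u v))"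
proof -
  have "\<forall>u<4. \<forall>v<4. q_unit u \<otimes> q_unit v = q_sign (fst (q_unit_mult u v)) \<otimes> q_unit (snd (q_unit_mult u v))"
    unfolding all_less_4
    by (simp add: q_unit_mult_def q_unit_def q_sign_def qi_square qj_square qk_square
        qj_qi qi_qk qk_qi qk_qj qj_qk flip: qk_def)
  then show ?thesis using assms by blast
qed

definition q8_map :: "bool \<times> nat \<Rightarrow> 'a" where
  "q8_map = (\<lambda>(s, u). q_sign s \<otimes> q_unit u)"

lemma q8_map_carrier [simp]: "q8_map p \<in> carrier G"
  by (simp add: q8_map_def split: prod.split)

lemma hom_q8_map: "q8_map \<in> hom Q8 G"
proof (rule homI)
  fix p q assume "p \<in> carrier Q8" "q \<in> carrier Q8"
  then obtain s u t v where pq: "p = (s, u)" "q = (t, v)" "u < 4" "v < 4"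
    by (auto simp: carrier_Q8)
  let ?f = "fst (q_unit_mult u v)" and ?r = "snd (q_unit_mult u v)"
  have "q_sign (s \<noteq> (t \<noteq> ?f)) \<otimes> q_unit ?r = q_sign s \<otimes> q_sign t \<otimes> (q_sign ?f \<otimes> q_unit ?r)"
    unfolding q_sign_xor by (simp add: m_assoc)
  also have "\<dots> = q_sign s \<otimes> (q_sign t \<otimes> q_unit u) \<otimes> q_unit v"
    using q_unit_mult[OF pq(3,4)] by (simp add: m_assoc)
  also have "\<dots> = q_sign s \<otimes> q_unit u \<otimes> (q_sign t \<otimes> q_unit v)"
    using dominant_commute[OF q_sign_dominant, of "q_unit u" t] by (simp add: m_assoc)
  finally show "q8_map (p \<otimes>\<^bsub>Q8\<^esub> q) = q8_map p \<otimes> q8_map q"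
    unfolding pq q8_map_def by (simp add: mult_Q8)
qed simp

definition zn_gen :: 'a where "zn_gen = axis_gen 1 [^] (4::nat)"

lemma zn_gen_carrier [simp]: "zn_gen \<in> carrier G"
  by (simp add: zn_gen_def)

lemma ord_zn_gen: "ord zn_gen = n"
  unfolding zn_gen_def using ord_pow[of "axis_gen 1" 4] ord_axis_gen[of 1] by simp

lemma zn_gen_int_pow_dominant: "zn_gen [^] (k::int) \<in> dominant"
proof -
  have "zn_gen \<in> dominant"
    unfolding zn_gen_def using axis_gen_pow_even[of 1 2] by simp
  then show ?thesis by (rule subgroup_int_pow_closed[OF subgroup_dominant])
qed

definition quaternion_map :: "(bool \<times> nat) \<times> int \<Rightarrow> 'a" where
  "quaternion_map = (\<lambda>(p, k). q8_map p \<otimes> zn_gen [^] k)"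

lemma hom_quaternion_map: "quaternion_map \<in> hom (Q8_Zn n) G"
  unfolding quaternion_map_def
proof (rule hom_DirProd_commuting[OF hom_q8_map int_pow_hom_integer_mod_group])
  show "zn_gen [^] n = \<one>" using ord_zn_gen pow_eq_id by simp
  show "q8_map p \<otimes> zn_gen [^] k = zn_gen [^] k \<otimes> q8_map p" for p and k :: int
    by (rule dominant_commute[OF zn_gen_int_pow_dominant q8_map_carrier, symmetric])
qed simp

lemma quaternion_map_eq_one:
  assumes p: "p \<in> carrier (Q8_Zn n)" and one: "quaternion_map p = \<one>"
  shows "p = \<one>\<^bsub>Q8_Zn n\<^esub>"
proof -
  obtain s u k where p_eq: "p = ((s, u), k)" "u < 4" "0 \<le> k" "k < int n"
    using p n_pos by (cases p) (auto simp: carrier_Q8 carrier_integer_mod_group)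
  let ?d = "zn_gen [^] k"
  have eq: "q_sign s \<otimes> q_unit u \<otimes> ?d = \<one>"
    using one unfolding quaternion_map_def q8_map_def p_eq by simp
  then have "q_sign s \<otimes> q_unit u \<otimes> ?d \<in> dominant"
    using subgroup.one_closed[OF subgroup_dominant] by simp
  then have "q_sign s \<otimes> q_unit u \<in> dominant"
    using subgroup_mult_mem_iff_right[OF subgroup_dominant zn_gen_int_pow_dominant] by simp
  then have "q_unit u \<in> dominant"
    using subgroup_mult_mem_iff_left[OF subgroup_dominant q_sign_dominant] by simp
  then have u0: "u = 0" using q_unit_notin_dominant p_eq(2) by blast
  then have sign_d: "q_sign s \<otimes> ?d = \<one>" using eq by (simp add: q_unit_def)
  have sign_sq: "q_sign s \<otimes> q_sign s = \<one>"
    using q_sign_xor[of s s] by (simp add: q_sign_def)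
  then have "?d = q_sign s"
    using l_cancel[of "q_sign s" ?d "q_sign s"] sign_d by simp
  then have "?d \<otimes> ?d = \<one>"
    using sign_sq by simp
  then have "zn_gen [^] (k + k) = \<one>"
    unfolding int_pow_mult[OF zn_gen_carrier] .
  then have "int n dvd 2 * k"
    using int_pow_eq_id[of zn_gen "k + k"] ord_zn_gen by (metis mult_2 zn_gen_carrier)
  then have "int n dvd k"
    using odd_n coprime_dvd_mult_right_iff[of "int n" 2 k] by simp
  then have k0: "k = 0"
    using p_eq(3,4) zdvd_not_zless[of k "int n"] by fastforce
  then have "s = False"
    using sign_d neg_one_neq_one by (auto simp: q_sign_def)
  then show ?thesis using p_eq u0 k0 by (simp add: one_Q8)
qed

lemma inj_quaternion_map: "inj_on quaternion_map (carrier (Q8_Zn n))"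
proof -
  interpret group_hom "Q8_Zn n" G quaternion_map
    by (simp add: group_hom_def group_hom_axioms_def group_Q8_Zn hom_quaternion_map)
  have "kernel (Q8_Zn n) G quaternion_map \<subseteq> {\<one>\<^bsub>Q8_Zn n\<^esub>}"
    using quaternion_map_eq_one unfolding kernel_def by blast
  then have "kernel (Q8_Zn n) G quaternion_map = {\<one>\<^bsub>Q8_Zn n\<^esub>}"
    using subgroup.one_closed[OF subgroup_kernel] by blast
  then show ?thesis using inj_iff_trivial_ker by blast
qed

theorem iso_Q8_Zn: "G \<cong> Q8_Zn n"
proof -
  have "quaternion_map ` carrier (Q8_Zn n) \<subseteq> carrier G"
    using hom_quaternion_map by (rule hom_carrier)
  moreover have "card (quaternion_map ` carrier (Q8_Zn n)) = card (carrier G)"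
    using card_image[OF inj_quaternion_map] card_carrier_Q8_Zn[OF n_pos] card_carrier by simp
  ultimately have "bij_betw quaternion_map (carrier (Q8_Zn n)) (carrier G)"
    using card_subset_eq[OF finite_carrier] inj_quaternion_map by (simp add: bij_betw_def)
  then have "Q8_Zn n \<cong> G"
    using hom_quaternion_map unfolding is_iso_def iso_def by blast
  then show ?thesis by (rule group.iso_sym[OF group_Q8_Zn])
qed

end

lemma Q8_Zn_pe_graph_pullback:
  assumes n: "odd n" and G: "group G" "finite (carrier G)"
    and f: "bij_betw f (carrier G) (carrier (Q8_Zn n))"
    and adj: "\<And>x y. x \<in> carrier G \<Longrightarrow> y \<in> carrier G \<Longrightarrow> pe_adj G x y \<longleftrightarrow> pe_adj (Q8_Zn n) (f x) (f y)"
  shows "Q8_Zn_pe_graph G (\<lambda>x. axis (f x)) n"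
proof -
  have f_carrier: "f x \<in> carrier (Q8_Zn n)" if "x \<in> carrier G" for x
    using f that bij_betwE by blast
  have finite_Q8_Zn: "finite (carrier (Q8_Zn n))"
    by (simp add: carrier_Q8 carrier_integer_mod_group odd_pos[OF n])
  show ?thesis
  proof (rule Q8_Zn_pe_graph.intro[OF G(1) Q8_Zn_pe_graph_axioms.intro])
    show "axis (f x) < 4" if "x \<in> carrier G" for x
      using f_carrier[OF that] by (auto simp: carrier_Q8 axis_def)
    show "common_cyclic G x y \<longleftrightarrow> axis (f x) = 0 \<or> axis (f y) = 0 \<or> axis (f x) = axis (f y)"
      if "x \<in> carrier G" "y \<in> carrier G" for x y
      using pe_graph_iso_common_cyclic[OF G group_Q8_Zn finite_Q8_Zn f adj that]
        common_cyclic_Q8_Zn[OF n f_carrier f_carrier] that by simp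
    show "card {x \<in> carrier G. axis (f x) = i} = 2 * n" if "i < 4" for i
    proof -
      have image: "{y \<in> carrier (Q8_Zn n). axis y = i} = f ` {x \<in> carrier G. axis (f x) = i}"
      proof (intro equalityI subsetI)
        fix y assume y: "y \<in> {y \<in> carrier (Q8_Zn n). axis y = i}"
        then obtain x where "x \<in> carrier G" "y = f x"
          using bij_betw_imp_surj_on[OF f] by (metis (no_types, lifting) imageE mem_Collect_eq)
        then show "y \<in> f ` {x \<in> carrier G. axis (f x) = i}" using y by blast
      qed (use f_carrier in blast)
      have "inj_on f {x \<in> carrier G. axis (f x) = i}"
        using bij_betw_imp_inj_on[OF f] by (rule inj_on_subset) blast
      then have "card {y \<in> carrier (Q8_Zn n). axis y = i} = card {x \<in> carrier G. axis (f x) = i}"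
        unfolding image by (rule card_image)
      then show ?thesis
        using card_axis_class[OF odd_pos[OF n] that] by simp
    qed
  qed (use G(2) n in auto)
qed

theorem theorem5:
  fixes G :: "('a, 'b) monoid_scheme" and n :: nat
  assumes "n > 0" and "odd n"
    and "group G" and "finite (carrier G)"
  shows "pe_graph_iso G (Q8 \<times>\<times> integer_mod_group n) \<longleftrightarrow> G \<cong> Q8 \<times>\<times> integer_mod_group n"
proof
  assume "pe_graph_iso G (Q8 \<times>\<times> integer_mod_group n)"
  then obtain f where "bij_betw f (carrier G) (carrier (Q8_Zn n))"
    and "\<forall>x\<in>carrier G. \<forall>y\<in>carrier G. pe_adj G x y \<longleftrightarrow> pe_adj (Q8_Zn n) (f x) (f y)"
    unfolding pe_graph_iso_def by blast
  then have "Q8_Zn_pe_graph G (\<lambda>x. axis (f x)) n"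
    using Q8_Zn_pe_graph_pullback assms(2-4) by blast
  then show "G \<cong> Q8 \<times>\<times> integer_mod_group n"
    by (rule Q8_Zn_pe_graph.iso_Q8_Zn)
next
  assume "G \<cong> Q8 \<times>\<times> integer_mod_group n"
  then show "pe_graph_iso G (Q8 \<times>\<times> integer_mod_group n)"
    using iso_imp_pe_graph_iso[OF assms(3) group_Q8_Zn] by simp
qed

end
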